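(* Let $n,m\ge1$, $V_{th}>0$, $\mathbf{W}\in\mathbb{R}^{n\times n}$, $\mathbf{F}\in\mathbb{R}^{n\times m}$, $\mathbf{b}\in\mathbb{R}^n$, and let $(\mathbf{x}[t])_{t\ge0}$ be inputs in $\mathbb{R}^m$. Consider the discrete feedback spiking neural network with the integrate-and-fire model: $\mathbf{u}[0]=\mathbf{0}$, $\mathbf{s}[0]=\mathbf{0}$, and for $t\ge0$ $$\mathbf{u}[t+\tfrac12]=\mathbf{u}[t]+\mathbf{W}\mathbf{s}[t]+\mathbf{F}\mathbf{x}[t]+\mathbf{b},\quad \mathbf{s}[t+1]=H(\mathbf{u}[t+\tfrac12]-V_{th}),\quad \mathbf{u}[t+1]=\mathbf{u}[t+\tfrac12]-V_{th}\mathbf{s}[t+1],$$ with $H$ the elementwise Heaviside step function. Define the average firing rates $\mathbf{a}[t]=\frac1t\sum_{\tau=1}^t\mathbf{s}[\tau]$ and the average inputs $\overline{\mathbf{x}}[t]=\frac{1}{t+1}\sum_{\tau=0}^t\mathbf{x}[\tau]$. Let $\mathbf{u}^+[t]\in\mathbb{R}^n$ denote the part of the membrane potential for which $$\mathbf{a}[t+1]=\sigma\!\left(\frac1{V_{th}}\left(\frac{t}{t+1}\mathbf{W}\mathbf{a}[t]+\mathbf{F}\overline{\mathbf{x}}[t]+\mathbf{b}-\frac{\mathbf{u}^+[t+1]}{t+1}\right)\right)$$ holds for all $t$. Suppose $\overline{\mathbf{x}}[t]\to\mathbf{x}^*$, and there exist constants $c$ and $\gamma<1$ such that $|\mathbf{u}^+_i[t]|\le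 c$ for all $i,t$ and $\|\mathbf{W}\|_2\le\gamma V_{th}$. Then $\mathbf{a}[t]$ converges to a point $\mathbf{a}^*$ satisfying $$\mathbf{a}^*=\sigma\!\left(\frac1{V_{th}}\left(\mathbf{W}\mathbf{a}^*+\mathbf{F}\mathbf{x}^*+\mathbf{b}\right)\right).$$
   Context: $\sigma$ is applied elementwise with $\sigma(x)=1$ for $x>1$, $\sigma(x)=x$ for $0\le x\le1$, $\sigma(x)=0$ for $x<0$. $\|\cdot\|_2$ is the spectral norm. In the paper $\mathbf{u}_i[t]=\mathbf{u}^-_i[t]+\mathbf{u}^+_i[t]$ where $\frac1t\mathbf{u}^-_i[t]=\min(\max(v_i[t]-V_{th},0),v_i[t])$ (with $v[t]$ the argument $\frac{t-1}{t}\mathbf{W}\mathbf{a}[t-1]+\mathbf{F}\overline{\mathbf{x}}[t-1]+\mathbf{b}$) collects the negative and excess positive terms, and $\mathbf{u}^+[t]$ is the remainder; with this decomposition the displayed relation holds. *)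

theory Defs
  imports "HOL-Analysis.Analysis"
begin

text \<open>Heaviside step function (convention H(0) = 1: a neuron fires when u >= V_th).\<close>
definition heaviside :: "real \<Rightarrow> real" where
  "heaviside x = (if x \<ge> 0 then 1 else 0)"

definition sigma :: "real \<Rightarrow> real" where
  "sigma x = (if x > 1 then 1 else if x < 0 then 0 else x)"

definition heavisidev :: "real ^ 'n \<Rightarrow> real ^ 'n" where
  "heavisidev v = (\<chi> i. heaviside (v $ i))"

definition sigmav :: "real ^ 'n \<Rightarrow> real ^ 'n" where
  "sigmav v = (\<chi> i. sigma (v $ i))"

definition avg_rate :: "(nat \<Rightarrow> real ^ 'n) \<Rightarrow> nat \<Rightarrow> real ^ 'n" where
  "avg_rate s t = (1 / real t) *\<^sub>R (\<Sum>\<tau>=1..t. s \<tau>)"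

definition avg_input :: "(nat \<Rightarrow> real ^ 'm) \<Rightarrow> nat \<Rightarrow> real ^ 'm" where
  "avg_input x t = (1 / real (t + 1)) *\<^sub>R (\<Sum>\<tau>=0..t. x \<tau>)"

end

theory Submission
  imports Defs
begin

text \<open>Let \<open>T v = sigmav ((1/Vth) *\<^sub>R (W *v v + F *v xstar + b))\<close>. By \<open>up_rel\<close>, the rate
  \<open>a (t+1)\<close> is \<open>T (a t)\<close> with the argument of \<open>sigmav\<close> perturbed by
  \<open>F *v (avg_input x t - xstar)\<close> and by the bounded vectors \<open>W *v a t\<close> and \<open>up (t+1)\<close> divided
  by \<open>t+1\<close>; this perturbation vanishes.  As \<open>sigma\<close> is 1-Lipschitz and \<open>\<parallel>W\<parallel> \<le> \<gamma> Vth\<close>,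
  \<open>T\<close> is a \<open>\<gamma>\<close>-contraction, so it has a fixed point (Banach), and an iteration of a
  contraction with vanishing errors converges to that fixed point.\<close>

lemma sigma_abs_diff_le: "\<bar>sigma p - sigma q\<bar> \<le> \<bar>p - q\<bar>"
  unfolding sigma_def by auto

lemma sigma_bounds: "0 \<le> sigma p" "sigma p \<le> 1"
  unfolding sigma_def by auto

lemma norm_sigmav_diff_le: "norm (sigmav v - sigmav w) \<le> norm (v - w)"
  by (rule norm_le_componentwise_cart) (simp add: sigmav_def sigma_abs_diff_le)

lemma dist_sigmav_affine_le:
  fixes W :: "real ^ 'm ^ 'n" and z :: "real ^ 'n" and p q :: "real ^ 'm"
  assumes "K \<ge> 0" and "K * onorm (\<lambda>v. W *v v) \<le> \<gamma>"
  shows "dist (sigmav (K *\<^sub>R (W *v p + z))) (sigmav (K *\<^sub>R (W *v q + z))) \<le> \<gamma> * dist p q"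
proof -
  have "dist (sigmav (K *\<^sub>R (W *v p + z))) (sigmav (K *\<^sub>R (W *v q + z)))
      \<le> norm (K *\<^sub>R (W *v p + z) - K *\<^sub>R (W *v q + z))"
    unfolding dist_norm by (rule norm_sigmav_diff_le)
  also have "\<dots> = K * norm (W *v (p - q))"
    using assms(1) by (simp add: matrix_vector_mult_diff_distrib flip: scaleR_diff_right)
  also have "\<dots> \<le> K * (onorm (\<lambda>v. W *v v) * norm (p - q))"
    using assms(1) by (intro mult_left_mono onorm) simp_all
  also have "\<dots> \<le> \<gamma> * dist p q"
    using assms(2) by (simp add: dist_norm mult.assoc[symmetric] mult_right_mono)
  finally show ?thesis .
qed

lemma dist_sigmav_scaled_add_le:
  assumes "K \<ge> 0"
  shows "dist (sigmav (K *\<^sub>R (y + r))) (sigmav (K *\<^sub>R y)) \<le> K * norm r"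
proof -
  have "dist (sigmav (K *\<^sub>R (y + r))) (sigmav (K *\<^sub>R y)) \<le> norm (K *\<^sub>R (y + r) - K *\<^sub>R y)"
    unfolding dist_norm by (rule norm_sigmav_diff_le)
  then show ?thesis using assms by (simp add: scaleR_add_right)
qed

lemma norm_le_card_mult_bound_cart:
  fixes v :: "real ^ 'n"
  assumes "\<And>i. \<bar>v $ i\<bar> \<le> B"
  shows "norm v \<le> real CARD('n) * B"
proof -
  have "norm v \<le> (\<Sum>i\<in>UNIV. \<bar>v $ i\<bar>)" by (rule norm_le_l1_cart)
  also have "\<dots> \<le> (\<Sum>i\<in>(UNIV :: 'n set). B)" using assms by (intro sum_mono)
  finally show ?thesis by simp
qed

lemma norm_avg_rate_le:
  fixes s :: "nat \<Rightarrow> real ^ 'n"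
  assumes "\<And>t. avg_rate s (Suc t) \<in> range sigmav"
  shows "norm (avg_rate s t) \<le> real CARD('n)"
proof -
  have "\<bar>avg_rate s t $ i\<bar> \<le> 1" for i
  proof (cases t)
    case (Suc t')
    then obtain v where "avg_rate s t = sigmav v" using assms by blast
    then show ?thesis by (simp add: sigmav_def sigma_bounds abs_le_iff)
  qed (simp add: avg_rate_def)
  then show ?thesis using norm_le_card_mult_bound_cart[of "avg_rate s t" 1] by simp
qed

lemma bounded_scaled_inverse_tendsto_zero:
  fixes f :: "nat \<Rightarrow> 'a::real_normed_vector"
  assumes "\<And>t. norm (f t) \<le> B"
  shows "(\<lambda>t. (1 / real (t + 1)) *\<^sub>R f t) \<longlonglongrightarrow> 0"
proof (rule Lim_null_comparison)
  show "\<forall>\<^sub>F t in sequentially. norm ((1 / real (t + 1)) *\<^sub>R f t) \<le> 1 / real (t + 1) * B"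
    using assms by (intro always_eventually allI) (simp add: divide_right_mono)
  have "(\<lambda>t. 1 / real (t + 1)) \<longlonglongrightarrow> 0"
    using LIMSEQ_Suc[OF lim_inverse_n'] by simp
  then show "(\<lambda>t. 1 / real (t + 1) * B) \<longlonglongrightarrow> 0"
    by (rule tendsto_mult_left_zero)
qed

lemma vanishing_perturbation_tendsto_zero:
  fixes F :: "real ^ 'm ^ 'n" and W :: "real ^ 'k ^ 'n"
    and y :: "nat \<Rightarrow> real ^ 'm" and v :: "nat \<Rightarrow> real ^ 'k" and w :: "nat \<Rightarrow> real ^ 'n"
  assumes "y \<longlonglongrightarrow> ystar" and "\<And>t. norm (v t) \<le> A" and "\<And>t. norm (w t) \<le> B"
  shows "(\<lambda>t. F *v (y t - ystar) - W *v ((1 / real (t + 1)) *\<^sub>R v t)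
              - (1 / real (t + 1)) *\<^sub>R w t) \<longlonglongrightarrow> 0"
proof -
  have "(\<lambda>t. y t - ystar) \<longlonglongrightarrow> 0" using assms(1) by (simp add: LIM_zero)
  then have "(\<lambda>t. F *v (y t - ystar)) \<longlonglongrightarrow> 0"
    by (rule bounded_linear.tendsto_zero[OF matrix_vector_mul_bounded_linear])
  moreover have "(\<lambda>t. W *v ((1 / real (t + 1)) *\<^sub>R v t)) \<longlonglongrightarrow> 0"
    using bounded_scaled_inverse_tendsto_zero[OF assms(2)]
    by (rule bounded_linear.tendsto_zero[OF matrix_vector_mul_bounded_linear])
  moreover have "(\<lambda>t. (1 / real (t + 1)) *\<^sub>R w t) \<longlonglongrightarrow> 0"
    using assms(3) by (rule bounded_scaled_inverse_tendsto_zero)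
  ultimately have "(\<lambda>t. F *v (y t - ystar) - W *v ((1 / real (t + 1)) *\<^sub>R v t)
              - (1 / real (t + 1)) *\<^sub>R w t) \<longlonglongrightarrow> 0 - 0 - 0"
    by (intro tendsto_diff)
  then show ?thesis by simp
qed

lemma contractive_recurrence_tendsto_zero:
  fixes d e :: "nat \<Rightarrow> real"
  assumes d_nonneg: "\<And>t. d t \<ge> 0" and "0 \<le> \<gamma>" "\<gamma> < 1"
    and rec: "\<And>t. d (Suc t) \<le> \<gamma> * d t + e t" and "e \<longlonglongrightarrow> 0"
  shows "d \<longlonglongrightarrow> 0"
proof (rule LIMSEQ_I)
  fix r :: real
  assume "0 < r"
  then have "r * (1 - \<gamma>) / 2 > 0" using \<open>\<gamma> < 1\<close> by simp
  then obtain N where N: "\<And>n. n \<ge> N \<Longrightarrow> norm (e n) < r * (1 - \<gamma>) / 2"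
    using LIMSEQ_D[OF \<open>e \<longlonglongrightarrow> 0\<close>] by (metis diff_zero)
  \<comment> \<open>below \<open>r/2\<close> the error can no longer push \<open>d\<close> up, since \<open>\<gamma> (r/2) + (1-\<gamma>) r/2 = r/2\<close>\<close>
  have d_after_N: "d (N + k) \<le> \<gamma> ^ k * d N + r / 2" for k
  proof (induction k)
    case 0
    then show ?case using \<open>0 < r\<close> by simp
  next
    case (Suc k)
    have "d (N + Suc k) \<le> \<gamma> * d (N + k) + e (N + k)" using rec[of "N + k"] by simp
    also have "\<dots> \<le> \<gamma> * (\<gamma> ^ k * d N + r / 2) + r * (1 - \<gamma>) / 2"
      using Suc \<open>0 \<le> \<gamma>\<close> N[of "N + k"] by (intro add_mono mult_left_mono) auto
    also have "\<dots> = \<gamma> ^ Suc k * d N + r / 2" by (simp add: algebra_simps diff_divide_distrib)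
    finally show ?case .
  qed
  have "(\<lambda>k. \<gamma> ^ k * d N) \<longlonglongrightarrow> 0"
    using assms(2,3) by (intro tendsto_mult_left_zero LIMSEQ_power_zero) auto
  then obtain M where M: "\<And>k. k \<ge> M \<Longrightarrow> norm (\<gamma> ^ k * d N) < r / 2"
    using LIMSEQ_D[of _ 0 "r / 2"] \<open>0 < r\<close> by (metis diff_zero half_gt_zero)
  show "\<exists>n0. \<forall>n\<ge>n0. norm (d n - 0) < r"
  proof (intro exI allI impI)
    fix n
    assume "n \<ge> N + M"
    define k where "k = n - N"
    have "n = N + k" "k \<ge> M" using \<open>n \<ge> N + M\<close> by (simp_all add: k_def)
    then show "norm (d n - 0) < r" using d_after_N[of k] M[of k] d_nonneg[of n] by simp
  qed
qed

lemma contraction_perturbed_iteration_converges: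
  fixes T :: "'a::complete_space \<Rightarrow> 'a"
  assumes "0 \<le> \<gamma>" "\<gamma> < 1"
    and contraction: "\<And>p q. dist (T p) (T q) \<le> \<gamma> * dist p q"
    and defect: "(\<lambda>t. dist (a (Suc t)) (T (a t))) \<longlonglongrightarrow> 0"
  shows "\<exists>z. T z = z \<and> a \<longlonglongrightarrow> z"
proof -
  obtain z where fixed: "T z = z"
    using banach_fix_type[OF assms(1,2)] contraction by blast
  have "dist (a (Suc t)) z \<le> \<gamma> * dist (a t) z + dist (a (Suc t)) (T (a t))" for t
  proof -
    have "dist (a (Suc t)) z \<le> dist (a (Suc t)) (T (a t)) + dist (T (a t)) (T z)"
      using dist_triangle[of "a (Suc t)" z "T (a t)"] fixed by simp
    then show ?thesis using contraction[of "a t" z] by simp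
  qed
  then have "(\<lambda>t. dist (a t) z) \<longlonglongrightarrow> 0"
    by (rule contractive_recurrence_tendsto_zero[OF zero_le_dist assms(1,2) _ defect])
  then show ?thesis using fixed tendsto_dist_iff by blast
qed

lemma sigmav_affine_perturbed_iteration_converges:
  fixes W :: "real ^ 'n ^ 'n" and a r :: "nat \<Rightarrow> real ^ 'n"
  assumes "K \<ge> 0" "\<gamma> < 1" "K * onorm (\<lambda>v. W *v v) \<le> \<gamma>"
    and step: "\<And>t. a (Suc t) = sigmav (K *\<^sub>R (W *v a t + z + r t))"
    and "r \<longlonglongrightarrow> 0"
  shows "\<exists>astar. a \<longlonglongrightarrow> astar \<and> astar = sigmav (K *\<^sub>R (W *v astar + z))"
proof -
  define T where "T = (\<lambda>v. sigmav (K *\<^sub>R (W *v v + z)))"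
  have "0 \<le> \<gamma>"
    using assms(1,3) onorm_pos_le[of "\<lambda>v. W *v v"] by (meson order.trans mult_nonneg_nonneg
        matrix_vector_mul_bounded_linear)
  have contraction: "dist (T p) (T q) \<le> \<gamma> * dist p q" for p q
    unfolding T_def using assms(1,3) by (rule dist_sigmav_affine_le)
  have "(\<lambda>t. dist (a (Suc t)) (T (a t))) \<longlonglongrightarrow> 0"
  proof (rule Lim_null_comparison)
    show "\<forall>\<^sub>F t in sequentially. norm (dist (a (Suc t)) (T (a t))) \<le> K * norm (r t)"
      unfolding step T_def
      by (intro always_eventually allI) (simp add: dist_sigmav_scaled_add_le[OF \<open>K \<ge> 0\<close>])
    show "(\<lambda>t. K * norm (r t)) \<longlonglongrightarrow> 0"
      using \<open>r \<longlonglongrightarrow> 0\<close> by (intro tendsto_mult_right_zero tendsto_norm_zero)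
  qed
  then obtain astar where "T astar = astar" "a \<longlonglongrightarrow> astar"
    using contraction_perturbed_iteration_converges[OF \<open>0 \<le> \<gamma>\<close> \<open>\<gamma> < 1\<close> contraction] by blast
  then show ?thesis unfolding T_def by metis
qed

theorem theorem2:
  fixes W :: "real ^ 'n ^ 'n" and F :: "real ^ 'm ^ 'n" and b :: "real ^ 'n"
    and x :: "nat \<Rightarrow> real ^ 'm" and Vth :: real
    and u s up :: "nat \<Rightarrow> real ^ 'n"
    and xstar :: "real ^ 'm" and c \<gamma> :: real
  assumes Vth_pos: "Vth > 0"
    and u0: "u 0 = 0" and s0: "s 0 = 0"
    and s_step: "\<And>t. s (Suc t) = heavisidev (u t + W *v s t + F *v x t + b - (\<chi> i. Vth))"
    and u_step: "\<And>t. u (Suc t) = (u t + W *v s t + F *v x t + b) - Vth *\<^sub>R s (Suc t)"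
    and up_rel: "\<And>t. avg_rate s (t + 1) =
        sigmav ((1 / Vth) *\<^sub>R ((real t / real (t + 1)) *\<^sub>R (W *v avg_rate s t)
                 + F *v avg_input x t + b - (1 / real (t + 1)) *\<^sub>R up (t + 1)))"
    and xbar_lim: "avg_input x \<longlonglongrightarrow> xstar"
    and up_bound: "\<And>i t. \<bar>up t $ i\<bar> \<le> c"
    and gamma_lt: "\<gamma> < 1"
    and W_norm: "onorm (\<lambda>v. W *v v) \<le> \<gamma> * Vth"
  shows "\<exists>astar. avg_rate s \<longlonglongrightarrow> astar \<and>
           astar = sigmav ((1 / Vth) *\<^sub>R (W *v astar + F *v xstar + b))"
proof -
  define K where "K = 1 / Vth"
  define r where "r = (\<lambda>t. F *v (avg_input x t - xstar) - W *v ((1 / real (t + 1)) *\<^sub>R avg_rate s t)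
                          - (1 / real (t + 1)) *\<^sub>R up (t + 1))"
  have K_facts: "K \<ge> 0" "K * onorm (\<lambda>v. W *v v) \<le> \<gamma>"
    using W_norm Vth_pos by (simp_all add: K_def field_simps)
  have rate_step: "avg_rate s (Suc t) = sigmav (K *\<^sub>R (W *v avg_rate s t + (F *v xstar + b) + r t))" for t
  proof -
    have "real t / real (t + 1) = 1 - 1 / real (t + 1)" by (simp add: field_simps)
    then have "(real t / real (t + 1)) *\<^sub>R (W *v avg_rate s t) + F *v avg_input x t + b
                 - (1 / real (t + 1)) *\<^sub>R up (t + 1)
               = W *v avg_rate s t + (F *v xstar + b) + r t"
      by (simp add: r_def scaleR_diff_left matrix_vector_mult_scaleR
          matrix_vector_mult_diff_distrib)
    then show ?thesis using up_rel[of t] unfolding K_def Suc_eq_plus1 by metis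
  qed
  have "r \<longlonglongrightarrow> 0"
    unfolding r_def using xbar_lim norm_avg_rate_le[of s] norm_le_card_mult_bound_cart[OF up_bound]
    by (rule vanishing_perturbation_tendsto_zero) (simp add: rate_step)
  then obtain astar where "avg_rate s \<longlonglongrightarrow> astar"
      "astar = sigmav (K *\<^sub>R (W *v astar + (F *v xstar + b)))"
    using sigmav_affine_perturbed_iteration_converges[where r = r, OF K_facts(1) gamma_lt K_facts(2)
        rate_step \<open>r \<longlonglongrightarrow> 0\<close>] by blast
  then show ?thesis unfolding K_def add.assoc by blast
qed

end
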